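(* Let $l,m$ be integers with $|l|>m>0$, let $d=\gcd(l,m)$ and write $l=l_1d$, $m=m_1d$. Let $h\in H(l,m)$ be written as $h=b^{p}v$ with $p\in\mathbb Z$ and $v\in L$. Let $r,s$ be integers. Then $h^{-1}a^{r}h=a^{s}$ holds if and only if $v\in C(a^{s})$ and one of the following holds: $p=0$ and $r=s$; or $p>0$ and $r=l_1^{p}dx$, $s=m_1^{p}dx$ for some integer $x$; or $p<0$ and $r=m_1^{-p}dx$, $s=l_1^{-p}dx$ for some integer $x$.
   Context: $H(l,m)=\langle a,b \mid b^{-1}a^{l}b=a^{m}\rangle$ (Baumslag–Solitar group). $L$ denotes the normal closure of $a$ in $H(l,m)$ (equivalently, the set of elements represented by words in $a,b$ with exponent sum $0$ in $b$); every element of $H(l,m)$ can be written uniquely as $b^p v$ with $p\in\mathbb Z$, $v\in L$. $C(h)$ denotes the centralizer of $h$ in $H(l,m)$. *)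

theory Defs
  imports Main
begin

text \<open>The Baumslag--Solitar group H(l,m) = < a, b | b^-1 a^l b = a^m >, modelled as
  words over the letters a, b and their inverses, modulo the congruence generated by
  free cancellation and the defining relation.  Group elements are equivalence classes;
  the product is concatenation, the inverse is formal inversion of words.\<close>

datatype gen = GA | GB

type_synonym letter = "gen \<times> bool"   \<comment> \<open>True = inverse letter\<close>
type_synonym word = "letter list"

definition linv :: "letter \<Rightarrow> letter" where
  "linv x = (fst x, \<not> snd x)"

definition winv :: "word \<Rightarrow> word" where
  "winv w = rev (map linv w)"

definition gpow :: "gen \<Rightarrow> int \<Rightarrow> word" where
  "gpow g k = (if 0 \<le> k then replicate (nat k) (g, False) else replicate (nat (- k)) (g, True))"

abbreviation apow :: "int \<Rightarrow> word" where "apow k \<equiv> gpow GA k"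
abbreviation bpow :: "int \<Rightarrow> word" where "bpow k \<equiv> gpow GB k"

inductive bs_eq :: "int \<Rightarrow> int \<Rightarrow> word \<Rightarrow> word \<Rightarrow> bool" for l m where
  refl: "bs_eq l m w w"
| sym: "bs_eq l m u w \<Longrightarrow> bs_eq l m w u"
| trans: "bs_eq l m u v \<Longrightarrow> bs_eq l m v w \<Longrightarrow> bs_eq l m u w"
| cancel: "bs_eq l m (u @ [x, linv x] @ w) (u @ w)"
| rel: "bs_eq l m (u @ bpow (-1) @ apow l @ bpow 1 @ w) (u @ apow m @ w)"

text \<open>Exponent sum in b of a word (the elements of L are those with b-exponent sum 0).\<close>
definition bexp :: "word \<Rightarrow> int" where
  "bexp w = sum_list (map (\<lambda>x. if fst x = GB then (if snd x then -1 else 1) else 0) w)"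

definition in_centralizer :: "int \<Rightarrow> int \<Rightarrow> word \<Rightarrow> word \<Rightarrow> bool" where
  "in_centralizer l m g v \<longleftrightarrow> bs_eq l m (v @ g) (g @ v)"

end

theory Submission
  imports Defs HOL.Rat
begin

(*
  Since b^-1 a^(l k) b = a^(m k), conjugation by b^p maps a^r to a^s whenever
  r, s have the stated form, and then h^-1 a^r h = a^s just says that v commutes with a^s.
  Conversely, suppose w^-1 a^r w = a^s with w = b^p v. The affine action of H(l,m) on Q
  (a: q -> q + 1, b: q -> (l/m) q) gives r = (l/m)^p s, which settles p = 0. The action on
  the Bass--Serre tree, whose vertices are the cosets g<a> written in Britton normal form,
  shows that a^r fixes the vertex w<a> of height p; for p > 0 this forces l^(j+1) | r m^j
  for all j < p, and since gcd(l/d, m/d) = 1 these divisibilities pin r and s down to the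
  stated form. The case p < 0 follows by exchanging r and s and conjugating by w^-1.
*)

section \<open>Words modulo the defining relations\<close>

lemma bs_eq_append_cong: "bs_eq l m u w \<Longrightarrow> bs_eq l m (xs @ u @ ys) (xs @ w @ ys)"
proof (induction rule: bs_eq.induct)
  case (cancel u x w)
  show ?case using bs_eq.cancel[of l m "xs @ u" x "w @ ys"] by simp
next
  case (rel u w)
  show ?case using bs_eq.rel[of l m "xs @ u" "w @ ys"] by simp
qed (auto intro: bs_eq.intros)

declare bs_eq.trans [trans]

lemma bs_eq_append_left: "bs_eq l m u w \<Longrightarrow> bs_eq l m (xs @ u) (xs @ w)"
  using bs_eq_append_cong[of l m u w xs "[]"] by simp

lemma bs_eq_append_right: "bs_eq l m u w \<Longrightarrow> bs_eq l m (u @ ys) (w @ ys)"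
  using bs_eq_append_cong[of l m u w "[]" ys] by simp

lemma linv_linv [simp]: "linv (linv x) = x"
  by (simp add: linv_def)

lemma winv_Nil [simp]: "winv [] = []"
  and winv_Cons [simp]: "winv (x # w) = winv w @ [linv x]"
  and winv_append [simp]: "winv (u @ w) = winv w @ winv u"
  and winv_winv [simp]: "winv (winv w) = w"
  by (simp_all add: winv_def rev_map comp_def)

lemma bs_eq_append_winv: "bs_eq l m (w @ winv w) []"
proof (induction w)
  case (Cons x w)
  have "bs_eq l m (x # w @ winv w @ [linv x]) [x, linv x]"
    using bs_eq_append_cong[OF Cons, of "[x]" "[linv x]"] by simp
  also have "bs_eq l m [x, linv x] []"
    using bs_eq.cancel[of l m "[]" x "[]"] by simp
  finally show ?case by simp
qed (simp add: bs_eq.refl)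

lemma bs_eq_winv_append: "bs_eq l m (winv w @ w) []"
  using bs_eq_append_winv[of l m "winv w"] by simp

lemma bs_eq_winv:
  assumes "bs_eq l m u w"
  shows "bs_eq l m (winv u) (winv w)"
proof -
  have "bs_eq l m (winv u) (winv u @ w @ winv w)"
    using bs_eq_append_left[OF bs_eq.sym[OF bs_eq_append_winv[of l m w]], of "winv u"] by simp
  also have "bs_eq l m \<dots> (winv u @ u @ winv w)"
    using bs_eq_append_cong[OF bs_eq.sym[OF assms]] .
  also have "bs_eq l m \<dots> (winv w)"
    using bs_eq_append_right[OF bs_eq_winv_append[of l m u], of "winv w"] by simp
  finally show ?thesis .
qed

lemma bs_eq_conj_iff: "bs_eq l m (winv u @ x @ u) y \<longleftrightarrow> bs_eq l m (x @ u) (u @ y)"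
proof
  assume "bs_eq l m (winv u @ x @ u) y"
  have "bs_eq l m (x @ u) (u @ winv u @ x @ u)"
    using bs_eq_append_right[OF bs_eq.sym[OF bs_eq_append_winv[of l m u]], of "x @ u"] by simp
  also have "bs_eq l m \<dots> (u @ y)"
    using bs_eq_append_left[OF \<open>bs_eq l m (winv u @ x @ u) y\<close>] .
  finally show "bs_eq l m (x @ u) (u @ y)" .
next
  assume "bs_eq l m (x @ u) (u @ y)"
  then have "bs_eq l m (winv u @ x @ u) (winv u @ u @ y)"
    using bs_eq_append_left[of l m "x @ u" "u @ y" "winv u"] by simp
  also have "bs_eq l m \<dots> y"
    using bs_eq_append_right[OF bs_eq_winv_append[of l m u], of y] by simp
  finally show "bs_eq l m (winv u @ x @ u) y" .
qed

lemma bs_eq_conj_inverse: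
  assumes "bs_eq l m (winv u @ x @ u) y"
  shows "bs_eq l m (u @ y @ winv u) x"
proof -
  have "bs_eq l m (u @ y @ winv u) (x @ u @ winv u)"
    using bs_eq_append_right[OF bs_eq.sym[OF assms[unfolded bs_eq_conj_iff]], of "winv u"]
    by simp
  also have "bs_eq l m \<dots> x"
    using bs_eq_append_left[OF bs_eq_append_winv[of l m u], of x] by simp
  finally show ?thesis .
qed

lemma bs_eq_conj_cong:
  assumes "bs_eq l m u u'"
  shows "bs_eq l m (winv u @ x @ u) (winv u' @ x @ u')"
proof -
  have "bs_eq l m (winv u @ x @ u) (winv u @ x @ u')"
    using bs_eq_append_left[OF assms, of "winv u @ x"] by simp
  also have "bs_eq l m \<dots> (winv u' @ x @ u')"
    using bs_eq_append_right[OF bs_eq_winv[OF assms], of "x @ u'"] .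
  finally show ?thesis .
qed

lemma bs_eq_conj_append:
  assumes "bs_eq l m (winv u @ x @ u) x'" and "bs_eq l m (winv u @ y @ u) y'"
  shows "bs_eq l m (winv u @ (x @ y) @ u) (x' @ y')"
proof -
  have "bs_eq l m (winv u @ (x @ y) @ u) ((winv u @ x @ u) @ (winv u @ y @ u))"
    using bs_eq_append_cong[OF bs_eq.sym[OF bs_eq_append_winv[of l m u]], of "winv u @ x" "y @ u"]
    by simp
  also have "bs_eq l m \<dots> (x' @ (winv u @ y @ u))"
    using bs_eq_append_right[OF assms(1)] .
  also have "bs_eq l m \<dots> (x' @ y')"
    using bs_eq_append_left[OF assms(2)] .
  finally show ?thesis .
qed

lemma gpow_0 [simp]: "gpow g 0 = []"
  and gpow_1: "gpow g 1 = [(g, False)]"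
  and gpow_minus_1: "gpow g (-1) = [(g, True)]"
  by (simp_all add: gpow_def)

lemma bs_eq_gpow_succ: "bs_eq l m (gpow g i @ gpow g 1) (gpow g (i + 1))"
proof (cases "i \<ge> 0")
  case True
  then have "nat (i + 1) = Suc (nat i)" by simp
  with True show ?thesis by (simp add: gpow_def replicate_append_same bs_eq.refl)
next
  case False
  then obtain k where k: "nat (- i) = Suc k" "nat (- (i + 1)) = k" by (intro that[of "nat (- i) - 1"]) auto
  have "gpow g i @ gpow g 1 = replicate k (g, True) @ [(g, True), linv (g, True)] @ []"
    using False k by (simp add: gpow_def linv_def replicate_append_same[symmetric])
  moreover have "gpow g (i + 1) = replicate k (g, True) @ []"
    using False k by (auto simp: gpow_def)
  ultimately show ?thesis by (simp only: bs_eq.cancel)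
qed

lemma bs_eq_gpow_pred: "bs_eq l m (gpow g i @ gpow g (-1)) (gpow g (i - 1))"
proof (cases "i \<le> 0")
  case True
  then have "nat (- (i - 1)) = Suc (nat (- i))" by simp
  with True show ?thesis by (simp add: gpow_def replicate_append_same bs_eq.refl)
next
  case False
  then obtain k where k: "nat i = Suc k" "nat (i - 1) = k" by (intro that[of "nat i - 1"]) auto
  have "gpow g i @ gpow g (-1) = replicate k (g, False) @ [(g, False), linv (g, False)] @ []"
    using False k by (simp add: gpow_def linv_def replicate_append_same[symmetric])
  moreover have "gpow g (i - 1) = replicate k (g, False) @ []"
    using False k by (auto simp: gpow_def)
  ultimately show ?thesis by (simp only: bs_eq.cancel)
qed

lemma bs_eq_gpow_add: "bs_eq l m (gpow g i @ gpow g j) (gpow g (i + j))"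
proof (induction j rule: int_induct[where k = 0])
  case (step1 j)
  have "bs_eq l m (gpow g i @ gpow g (j + 1)) (gpow g i @ gpow g j @ gpow g 1)"
    using bs_eq_append_left[OF bs_eq.sym[OF bs_eq_gpow_succ]] by simp
  also have "bs_eq l m \<dots> (gpow g (i + j) @ gpow g 1)"
    using bs_eq_append_right[OF step1(2)] by simp
  also have "bs_eq l m \<dots> (gpow g (i + (j + 1)))"
    using bs_eq_gpow_succ[of l m g "i + j"] by (simp add: add.assoc)
  finally show ?case .
next
  case (step2 j)
  have "bs_eq l m (gpow g i @ gpow g (j - 1)) (gpow g i @ gpow g j @ gpow g (-1))"
    using bs_eq_append_left[OF bs_eq.sym[OF bs_eq_gpow_pred]] by simp
  also have "bs_eq l m \<dots> (gpow g (i + j) @ gpow g (-1))"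
    using bs_eq_append_right[OF step2(2)] by simp
  also have "bs_eq l m \<dots> (gpow g (i + (j - 1)))"
    using bs_eq_gpow_pred[of l m g "i + j"] by (simp add: algebra_simps)
  finally show ?case .
qed (simp add: bs_eq.refl)

lemma winv_gpow [simp]: "winv (gpow g k) = gpow g (- k)"
proof -
  have "winv (replicate n x) = replicate n (linv x)" for n x
    by (induction n) (auto simp: replicate_append_same)
  then show ?thesis by (auto simp: gpow_def linv_def)
qed

lemma neq_GB_iff [simp]: "g \<noteq> GB \<longleftrightarrow> g = GA"
  by (cases g) simp_all

lemma bexp_Nil [simp]: "bexp [] = 0"
  and bexp_Cons: "bexp (x # w) = (if fst x = GB then (if snd x then -1 else 1) else 0) + bexp w"
  and bexp_append: "bexp (u @ w) = bexp u + bexp w"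
  and bexp_bpow: "bexp (bpow k) = k"
  by (simp_all add: bexp_def gpow_def sum_list_replicate)

lemma bexp_winv: "bexp (winv w) = - bexp w"
  by (induction w) (auto simp: bexp_append bexp_Cons linv_def bexp_def)

section \<open>Conjugating powers of a by powers of b\<close>

lemma bs_eq_conj_b_apow_nat: "bs_eq l m (bpow (-1) @ apow (l * int k) @ bpow 1) (apow (m * int k))"
proof (induction k)
  case 0
  show ?case using bs_eq_winv_append[of l m "bpow 1"] by simp
next
  case (Suc k)
  have "bs_eq l m (bpow (-1) @ apow (l * int (Suc k)) @ bpow 1)
      (winv (bpow 1) @ (apow (l * int k) @ apow l) @ bpow 1)"
    using bs_eq_append_cong[OF bs_eq.sym[OF bs_eq_gpow_add[of l m GA "l * int k" l]],
        of "bpow (-1)" "bpow 1"]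
    by (simp add: algebra_simps)
  also have "bs_eq l m \<dots> (apow (m * int k) @ apow m)"
    using Suc bs_eq.rel[of l m "[]" "[]"] by (intro bs_eq_conj_append) simp_all
  also have "bs_eq l m \<dots> (apow (m * int (Suc k)))"
    using bs_eq_gpow_add[of l m GA "m * int k" m] by (simp add: algebra_simps)
  finally show ?case .
qed

lemma bs_eq_conj_b_apow: "bs_eq l m (bpow (-1) @ apow (l * k) @ bpow 1) (apow (m * k))"
proof (cases "k \<ge> 0")
  case True
  then show ?thesis using bs_eq_conj_b_apow_nat[of l m "nat k"] by simp
next
  case False
  then show ?thesis using bs_eq_winv[OF bs_eq_conj_b_apow_nat[of l m "nat (- k)"]] by simp
qed

lemma bs_eq_conj_bpow_apow:
  assumes "l = l1 * d" and "m = m1 * d"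
  shows "bs_eq l m (bpow (- int n) @ apow (l1 ^ n * d * x) @ bpow (int n)) (apow (m1 ^ n * d * x))"
proof (induction n arbitrary: x)
  case 0
  show ?case by (simp add: bs_eq.refl)
next
  case (Suc n)
  have "bs_eq l m (bpow (- int (Suc n)) @ apow (l1 ^ Suc n * d * x) @ bpow (int (Suc n)))
      (winv (bpow (int n) @ bpow 1) @ apow (l1 ^ n * d * (l1 * x)) @ (bpow (int n) @ bpow 1))"
    using bs_eq_conj_cong[OF bs_eq.sym[OF bs_eq_gpow_add[of l m GB "int n" 1]]]
    by (simp add: algebra_simps)
  also have "bs_eq l m \<dots> (bpow (-1) @ apow (l * (m1 ^ n * x)) @ bpow 1)"
    using bs_eq_append_cong[OF Suc[of "l1 * x"], of "bpow (-1)" "bpow 1"] assms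
    by (simp add: algebra_simps)
  also have "bs_eq l m \<dots> (apow (m1 ^ Suc n * d * x))"
    using bs_eq_conj_b_apow[of l m "m1 ^ n * x"] assms by (simp add: algebra_simps)
  finally show ?case .
qed

definition conj_exponents :: "int \<Rightarrow> int \<Rightarrow> int \<Rightarrow> int \<Rightarrow> int \<Rightarrow> bool" where
  "conj_exponents l m p r s \<longleftrightarrow>
     (p = 0 \<and> r = s) \<or>
     (p > 0 \<and> (\<exists>x::int. r = (l div gcd l m) ^ nat p * gcd l m * x \<and>
                         s = (m div gcd l m) ^ nat p * gcd l m * x)) \<or>
     (p < 0 \<and> (\<exists>x::int. r = (m div gcd l m) ^ nat (- p) * gcd l m * x \<and>
                         s = (l div gcd l m) ^ nat (- p) * gcd l m * x))"

lemma bs_eq_conj_bpow_apow_if_conj_exponents: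
  assumes "conj_exponents l m p r s"
  shows "bs_eq l m (bpow (- p) @ apow r @ bpow p) (apow s)"
proof -
  have l: "l = (l div gcd l m) * gcd l m" and m: "m = (m div gcd l m) * gcd l m"
    by simp_all
  from assms consider "p = 0" "r = s"
    | x where "p > 0" and "r = (l div gcd l m) ^ nat p * gcd l m * x"
        and "s = (m div gcd l m) ^ nat p * gcd l m * x"
    | x where "p < 0" and "r = (m div gcd l m) ^ nat (- p) * gcd l m * x"
        and "s = (l div gcd l m) ^ nat (- p) * gcd l m * x"
    unfolding conj_exponents_def by blast
  then show ?thesis
  proof cases
    case 1
    then show ?thesis by (simp add: bs_eq.refl)
  next
    case (2 x)
    then show ?thesis using bs_eq_conj_bpow_apow[OF l m, of "nat p" x] by simp
  next
    case (3 x)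
    then have "bs_eq l m (winv (bpow (- p)) @ apow s @ bpow (- p)) (apow r)"
      using bs_eq_conj_bpow_apow[OF l m, of "nat (- p)" x] by simp
    then show ?thesis using bs_eq_conj_inverse by fastforce
  qed
qed

lemma conj_bpow_apow_iff_in_centralizer:
  assumes "conj_exponents l m p r s"
  shows "bs_eq l m (winv (bpow p @ v) @ apow r @ bpow p @ v) (apow s)
    \<longleftrightarrow> in_centralizer l m (apow s) v"
proof -
  have "bs_eq l m (winv (bpow p @ v) @ apow r @ bpow p @ v) (winv v @ apow s @ v)"
    using bs_eq_append_cong[OF bs_eq_conj_bpow_apow_if_conj_exponents[OF assms], of "winv v" v]
    by simp
  then have "bs_eq l m (winv (bpow p @ v) @ apow r @ bpow p @ v) (apow s)
      \<longleftrightarrow> bs_eq l m (winv v @ apow s @ v) (apow s)"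
    using bs_eq.sym bs_eq.trans by meson
  also have "\<dots> \<longleftrightarrow> bs_eq l m (apow s @ v) (v @ apow s)"
    by (rule bs_eq_conj_iff)
  also have "\<dots> \<longleftrightarrow> in_centralizer l m (apow s) v"
    unfolding in_centralizer_def using bs_eq.sym by blast
  finally show ?thesis .
qed

section \<open>Integer divisibility\<close>

lemma int_mult_pow_eq_parametrization:
  fixes A B r s :: int
  assumes "A \<noteq> 0" and "n \<ge> 1" and "r * B ^ n = s * A ^ n"
    and "A dvd r" and "A ^ n dvd r * B ^ (n - 1)"
  shows "\<exists>x. r = (A div gcd A B) ^ n * gcd A B * x \<and> s = (B div gcd A B) ^ n * gcd A B * x"
proof -
  define d a b where "d = gcd A B" and "a = A div d" and "b = B div d"
  have d: "d > 0" and A: "A = a * d" and B: "B = b * d"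
    using assms(1) by (simp_all add: d_def a_def b_def)
  have coprime: "coprime a b"
    using div_gcd_coprime[of A B] assms(1) by (simp add: a_def b_def d_def)
  have "a \<noteq> 0"
    using assms(1) A by auto
  obtain k where n: "n = Suc k"
    using assms(2) by (cases n) auto
  have "(r * b ^ n) * d ^ n = (s * a ^ n) * d ^ n"
    using assms(3) A B by (simp add: power_mult_distrib ac_simps)
  then have eq: "r * b ^ n = s * a ^ n"
    using d by simp
  then have "a ^ n dvd r"
    using coprime by (metis dvd_triv_right coprime_dvd_mult_left_iff coprime_power_left_iff
        coprime_power_right_iff)
  then obtain y where y: "r = a ^ n * y"
    by blast
  have s: "s = b ^ n * y"
    using eq y \<open>a \<noteq> 0\<close> by (simp add: ac_simps)
  have "a * d dvd a * (a ^ k * y)"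
    using assms(4) A y n by (simp add: ac_simps)
  then have dvd_a: "d dvd a ^ k * y"
    using \<open>a \<noteq> 0\<close> by simp
  have "(a ^ n * d ^ k) * d dvd (a ^ n * d ^ k) * (b ^ k * y)"
    using assms(5) A B y n by (simp add: power_mult_distrib ac_simps)
  then have dvd_b: "d dvd b ^ k * y"
    using \<open>a \<noteq> 0\<close> d by simp
  have "d dvd gcd (a ^ k * y) (b ^ k * y)"
    using dvd_a dvd_b by simp
  also have "gcd (a ^ k * y) (b ^ k * y) = \<bar>y\<bar>"
    using coprime by (simp add: gcd_mult_right gcd.commute[of b a])
  finally obtain x where "y = d * x"
    by auto
  with y s show ?thesis
    by (intro exI[of _ x]) (simp add: a_def b_def d_def ac_simps)
qed

lemma int_add_mod_eq_selfE:
  fixes M :: int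
  assumes "(x + r) mod M = x" and "0 \<le> x" and "x < M"
  obtains t where "r = M * t" and "(x + r) div M = t"
proof -
  have "(x + r) mod M = x mod M"
    using assms by simp
  then have "M dvd (x + r) - x"
    by (simp only: mod_eq_dvd_iff)
  then obtain t where "r = M * t" by auto
  with assms show thesis by (intro that) simp_all
qed

section \<open>The action on the Bass--Serre tree\<close>

locale bs_group =
  fixes l m :: int
  assumes l_nonzero: "l \<noteq> 0" and m_pos: "m > 0"
begin

text \<open>
  A list \<open>[(e\<^sub>1, x\<^sub>1), \<dots>, (e\<^sub>n, x\<^sub>n)]\<close> encodes the left coset
  \<open>a\<^bsup>x\<^sub>1\<^esup> t\<^sub>1 \<cdots> a\<^bsup>x\<^sub>n\<^esup> t\<^sub>n \<langle>a\<rangle>\<close>,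
  where \<open>t\<^sub>i = b\<close> with digit \<open>0 \<le> x\<^sub>i < \<bar>l\<bar>\<close> if \<open>e\<^sub>i\<close>,
  and \<open>t\<^sub>i = b\<^sup>-\<^sup>1\<close> with \<open>0 \<le> x\<^sub>i < m\<close> otherwise; \<open>normal\<close> excludes
  the pinches \<open>b a\<^sup>0 b\<^sup>-\<^sup>1\<close> and \<open>b\<^sup>-\<^sup>1 a\<^sup>0 b\<close> (Britton's normal form).
  These cosets are the vertices of the Bass--Serre tree, and \<open>act_word\<close> is the
  left action of \<open>H(l,m)\<close> on them.
\<close>

definition digit_bound :: "bool \<Rightarrow> int" where
  "digit_bound e = (if e then \<bar>l\<bar> else m)"

text \<open>From \<open>a\<^bsup>\<bar>l\<bar>q\<^esup> b = b a\<^bsup>sgn l \<cdot> m q\<^esup>\<close> and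
  \<open>a\<^bsup>m q\<^esup> b\<^sup>-\<^sup>1 = b\<^sup>-\<^sup>1 a\<^bsup>l q\<^esup>\<close>.\<close>
definition carry :: "bool \<Rightarrow> int" where
  "carry e = (if e then sgn l * m else l)"

fun shift_a :: "int \<Rightarrow> (bool \<times> int) list \<Rightarrow> (bool \<times> int) list" where
  "shift_a k [] = []"
| "shift_a k ((e, x) # xs) =
     (e, (x + k) mod digit_bound e) # shift_a ((x + k) div digit_bound e * carry e) xs"

fun normal :: "(bool \<times> int) list \<Rightarrow> bool" where
  "normal [] = True"
| "normal ((e, x) # xs) \<longleftrightarrow> 0 \<le> x \<and> x < digit_bound e \<and> normal xs \<and>
     (case xs of [] \<Rightarrow> True | (e', x') # _ \<Rightarrow> e' \<noteq> e \<longrightarrow> x' \<noteq> 0)"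

fun height :: "(bool \<times> int) list \<Rightarrow> int" where
  "height [] = 0"
| "height ((e, x) # xs) = (if e then 1 else -1) + height xs"

definition push_b :: "(bool \<times> int) list \<Rightarrow> (bool \<times> int) list" where
  "push_b xs = (if xs \<noteq> [] \<and> hd xs = (False, 0) then tl xs else (True, 0) # xs)"

definition push_b_inv :: "(bool \<times> int) list \<Rightarrow> (bool \<times> int) list" where
  "push_b_inv xs = (if xs \<noteq> [] \<and> hd xs = (True, 0) then tl xs else (False, 0) # xs)"

definition act_letter :: "letter \<Rightarrow> (bool \<times> int) list \<Rightarrow> (bool \<times> int) list" where
  "act_letter x =
     (if fst x = GA then shift_a (if snd x then -1 else 1) else if snd x then push_b_inv else push_b)"

definition act_word :: "word \<Rightarrow> (bool \<times> int) list \<Rightarrow> (bool \<times> int) list" where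
  "act_word w = foldr act_letter w"

lemma act_word_Nil [simp]: "act_word [] xs = xs"
  and act_word_Cons [simp]: "act_word (x # w) xs = act_letter x (act_word w xs)"
  and act_word_append: "act_word (u @ w) xs = act_word u (act_word w xs)"
  by (simp_all add: act_word_def)

lemma digit_bound_pos: "digit_bound e > 0"
  using l_nonzero m_pos by (simp add: digit_bound_def)

lemma shift_a_add: "shift_a j (shift_a k xs) = shift_a (k + j) xs"
proof (induction xs arbitrary: j k)
  case (Cons y xs)
  obtain e x where y: "y = (e, x)" by fastforce
  have "(x + k) div digit_bound e + ((x + k) mod digit_bound e + j) div digit_bound e
      = (x + (k + j)) div digit_bound e"
    using div_add1_eq[of "x + k" j "digit_bound e"] div_add1_eq[of "(x + k) mod digit_bound e" j "digit_bound e"]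
    by (simp add: add.assoc)
  then have "(x + k) div digit_bound e * carry e + ((x + k) mod digit_bound e + j) div digit_bound e * carry e
      = (x + (k + j)) div digit_bound e * carry e"
    by (metis distrib_right)
  then show ?case using Cons y by (simp add: mod_add_left_eq add.assoc)
qed simp

lemma shift_a_0: "normal xs \<Longrightarrow> shift_a 0 xs = xs"
  by (induction xs rule: normal.induct) simp_all

lemma mod_add_carry_other:
  assumes "e' \<noteq> e" and "0 \<le> x" and "x < digit_bound e'"
  shows "(x + q * carry e) mod digit_bound e' = x"
proof -
  have "digit_bound e' dvd carry e"
    using assms(1) by (cases e) (auto simp: digit_bound_def carry_def)
  then obtain k where k: "q * carry e = (q * k) * digit_bound e'"
    by (metis dvdE mult.commute mult.left_commute)
  have "(x + q * carry e) mod digit_bound e' = x mod digit_bound e'"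
    by (simp only: k mod_mult_self1)
  then show ?thesis using assms(2,3) by simp
qed

lemma normal_shift_a: "normal xs \<Longrightarrow> normal (shift_a k xs)"
proof (induction xs arbitrary: k rule: normal.induct)
  case (2 e x xs)
  define c where "c = (x + k) div digit_bound e * carry e"
  have "case shift_a c xs of [] \<Rightarrow> True | (e', x') # _ \<Rightarrow> e' \<noteq> e \<longrightarrow> x' \<noteq> 0"
  proof (cases xs)
    case (Cons y ys)
    obtain e' x' where y: "y = (e', x')" by fastforce
    have x': "0 \<le> x'" "x' < digit_bound e'" "e' \<noteq> e \<longrightarrow> x' \<noteq> 0"
      using 2(2) Cons y by auto
    show ?thesis
    proof (cases "e' = e")
      case False
      then have "(x' + c) mod digit_bound e' = x'"
        unfolding c_def using mod_add_carry_other x' by blast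
      with Cons y x' show ?thesis by simp
    qed (simp add: Cons y)
  qed simp
  with 2 digit_bound_pos[of e] show ?case by (simp add: c_def)
qed simp

lemma normal_push_b: "normal xs \<Longrightarrow> normal (push_b xs)"
  and normal_push_b_inv: "normal xs \<Longrightarrow> normal (push_b_inv xs)"
  using digit_bound_pos
  by (cases xs rule: normal.cases; auto simp: push_b_def push_b_inv_def split: list.splits)+

lemma push_b_inv_push_b: "normal xs \<Longrightarrow> push_b_inv (push_b xs) = xs"
  and push_b_push_b_inv: "normal xs \<Longrightarrow> push_b (push_b_inv xs) = xs"
  by (cases xs rule: normal.cases; auto simp: push_b_def push_b_inv_def split: list.splits)+

lemma normal_act_word: "normal xs \<Longrightarrow> normal (act_word w xs)"
  by (induction w) (auto simp: act_letter_def normal_shift_a normal_push_b normal_push_b_inv)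

lemma act_letter_linv: "normal xs \<Longrightarrow> act_letter x (act_letter (linv x) xs) = xs"
  by (cases x) (auto simp: act_letter_def linv_def shift_a_add shift_a_0 push_b_inv_push_b push_b_push_b_inv)

lemma act_word_apow: "normal xs \<Longrightarrow> act_word (apow k) xs = shift_a k xs"
proof -
  assume "normal xs"
  have "act_word (replicate n (GA, b)) xs = shift_a (if b then - int n else int n) xs" for n b
    using \<open>normal xs\<close>
    by (induction n) (auto simp: act_letter_def shift_a_add shift_a_0 algebra_simps)
  then show ?thesis by (simp add: gpow_def)
qed

lemma push_b_inv_shift_a_push_b:
  assumes "normal xs"
  shows "push_b_inv (shift_a l (push_b xs)) = shift_a m xs"
proof (cases "xs \<noteq> [] \<and> hd xs = (False, 0)")
  case True
  then obtain ys where xs: "xs = (False, 0) # ys" by (cases xs) auto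
  have "push_b_inv (shift_a l ys) = (False, 0) # shift_a l ys"
  proof (cases ys)
    case (Cons y zs)
    obtain e x where y: "y = (e, x)" by fastforce
    have "0 \<le> x" "x < digit_bound e" "e \<longrightarrow> x \<noteq> 0"
      using assms xs Cons y by auto
    then show ?thesis
      using Cons y dvd_imp_le_int[of x l] by (auto simp: push_b_inv_def digit_bound_def)
  qed (simp add: push_b_inv_def)
  moreover have "shift_a m xs = (False, 0) # shift_a l ys"
    using xs m_pos by (simp add: digit_bound_def carry_def)
  ultimately show ?thesis using xs by (simp add: push_b_def)
next
  case False
  have "l div \<bar>l\<bar> = sgn l"
    using l_nonzero by (metis sgn_mult_abs abs_eq_0 nonzero_mult_div_cancel_right)
  then have "l div digit_bound True * carry True = m"
    using l_nonzero by (simp add: digit_bound_def carry_def sgn_if)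
  moreover have "l mod digit_bound True = 0"
    by (simp add: digit_bound_def)
  ultimately have "shift_a l ((True, 0) # xs) = (True, 0) # shift_a m xs"
    by (simp only: shift_a.simps add_0)
  moreover have "push_b xs = (True, 0) # xs"
    using False by (auto simp: push_b_def)
  ultimately show ?thesis by (simp only: push_b_inv_def) simp
qed

lemma act_word_bs_eq: "bs_eq l m u w \<Longrightarrow> normal xs \<Longrightarrow> act_word u xs = act_word w xs"
proof (induction arbitrary: xs rule: bs_eq.induct)
  case (cancel u x w)
  then show ?case by (simp add: act_word_append act_letter_linv normal_act_word)
next
  case (rel u w)
  have "normal (act_word w xs)"
    using rel normal_act_word by blast
  then have "act_word (bpow (-1) @ apow l @ bpow 1) (act_word w xs) = act_word (apow m) (act_word w xs)"
    by (simp add: act_word_append gpow_1 gpow_minus_1 act_letter_def act_word_apow normal_push_b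
        push_b_inv_shift_a_push_b)
  then show ?case by (simp add: act_word_append)
qed simp_all

lemma height_act_word: "height (act_word w xs) = height xs + bexp w"
proof -
  have "height (shift_a k xs) = height xs" for k xs
    by (induction k xs rule: shift_a.induct) simp_all
  moreover have "height (push_b xs) = height xs + 1" and "height (push_b_inv xs) = height xs - 1" for xs
    by (cases xs; auto simp: push_b_def push_b_inv_def)+
  ultimately show ?thesis
    by (induction w) (auto simp: act_letter_def bexp_Cons)
qed

lemma shift_a_fixed_ConsE:
  assumes "shift_a r ((e, x) # xs) = (e, x) # xs" and "0 \<le> x" and "x < digit_bound e"
  obtains t where "r = digit_bound e * t" and "shift_a (t * carry e) xs = xs"
proof -
  have "(x + r) mod digit_bound e = x" and "shift_a ((x + r) div digit_bound e * carry e) xs = xs"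
    using assms(1) by simp_all
  with assms(2,3) show thesis
    by (metis int_add_mod_eq_selfE that)
qed

text \<open>Passing a letter \<open>b\<close> of the vertex forces \<open>l dvd r\<close> and replaces \<open>r\<close> by
  \<open>r m / l\<close>; passing a letter \<open>b\<^sup>-\<^sup>1\<close> forces \<open>m dvd r\<close> and replaces \<open>r\<close>
  by \<open>r l / m\<close>.\<close>
lemma shift_a_fixed_dvd:
  "normal xs \<Longrightarrow> shift_a r xs = xs \<Longrightarrow> int j < height xs \<Longrightarrow> l ^ Suc j dvd r * m ^ j"
proof (induction xs arbitrary: r j rule: normal.induct)
  case (2 e x xs)
  have "0 \<le> x" "x < digit_bound e"
    using 2(2) by simp_all
  then obtain t where r: "r = digit_bound e * t" and fixed: "shift_a (t * carry e) xs = xs"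
    using shift_a_fixed_ConsE[OF 2(3)] by blast
  have IH: "l ^ Suc i dvd t * carry e * m ^ i" if "int i < height xs" for i
    using 2 fixed that by auto
  show ?case
  proof (cases e)
    case True
    then have carry: "t * carry e * l = r * m"
      using r by (simp add: digit_bound_def carry_def abs_if sgn_if)
    show ?thesis
    proof (cases j)
      case 0
      then show ?thesis using True r by (simp add: digit_bound_def)
    next
      case (Suc i)
      then have "l * l ^ Suc i dvd l * (t * carry e * m ^ i)"
        using True 2(4) IH[of i] by simp
      also have "l * (t * carry e * m ^ i) = r * m ^ j"
        using carry Suc by (simp add: ac_simps)
      finally show ?thesis using Suc by simp
    qed
  next
    case False
    then have "l ^ Suc (Suc j) dvd t * carry e * m ^ Suc j"
      using 2(4) IH[of "Suc j"] by simp
    also have "t * carry e * m ^ Suc j = l * (r * m ^ j)"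
      using False r by (simp add: digit_bound_def carry_def ac_simps)
    finally show ?thesis using l_nonzero by simp
  qed
qed simp

section \<open>The affine action on the rationals\<close>

definition slope :: rat where
  "slope = of_int l / of_int m"

definition affine_letter :: "letter \<Rightarrow> rat \<Rightarrow> rat" where
  "affine_letter x q =
     (if fst x = GA then (if snd x then q - 1 else q + 1) else (if snd x then q / slope else q * slope))"

definition affine_word :: "word \<Rightarrow> rat \<Rightarrow> rat" where
  "affine_word w = foldr affine_letter w"

lemma affine_word_Nil [simp]: "affine_word [] q = q"
  and affine_word_Cons [simp]: "affine_word (x # w) q = affine_letter x (affine_word w q)"
  and affine_word_append: "affine_word (u @ w) q = affine_word u (affine_word w q)"
  by (simp_all add: affine_word_def)

lemma slope_nonzero: "slope \<noteq> 0"
  using l_nonzero m_pos by (simp add: slope_def)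

lemma affine_word_apow: "affine_word (apow k) q = q + of_int k"
proof -
  have "affine_word (replicate n (GA, b)) q = q + (if b then - of_nat n else of_nat n)" for n b
    by (induction n) (auto simp: affine_letter_def)
  then show ?thesis by (simp add: gpow_def)
qed

lemma affine_word_bs_eq: "bs_eq l m u w \<Longrightarrow> affine_word u q = affine_word w q"
proof (induction arbitrary: q rule: bs_eq.induct)
  case (cancel u x w)
  have "affine_letter x (affine_letter (linv x) q) = q" for q
    using slope_nonzero by (auto simp: affine_letter_def linv_def)
  then show ?case by (simp add: affine_word_append)
next
  case (rel u w)
  have "affine_word (bpow (-1) @ apow l @ bpow 1) q = affine_word (apow m) q" for q
    using slope_nonzero m_pos
    by (simp add: affine_word_append affine_word_apow gpow_1 gpow_minus_1 affine_letter_def slope_def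
        field_simps)
  then show ?case by (simp add: affine_word_append)
qed simp_all

lemma affine_word_linear: "affine_word w q = affine_word w 0 + slope powi bexp w * q"
proof (induction w arbitrary: q)
  case (Cons x w)
  have "slope powi bexp (x # w)
      = slope powi bexp w * (if fst x = GB then (if snd x then inverse slope else slope) else 1)"
    using slope_nonzero power_int_add[of slope "bexp w" 1] power_int_add[of slope "bexp w" "-1"]
    by (auto simp: bexp_Cons add.commute)
  then show ?case
    using Cons[of q] by (auto simp: affine_letter_def algebra_simps divide_inverse)
qed simp

section \<open>Necessity of the exponent condition\<close>

lemma slope_power_if_conj_apow:
  assumes "bs_eq l m (winv w @ apow r @ w) (apow s)"
  shows "of_int r = slope powi bexp w * of_int s"
proof -
  have "affine_word (apow r @ w) 0 = affine_word (w @ apow s) 0"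
    using assms by (intro affine_word_bs_eq) (simp add: bs_eq_conj_iff)
  then show ?thesis
    by (simp add: affine_word_append affine_word_apow affine_word_linear[of w "of_int s"])
qed

lemma dvd_if_conj_apow:
  assumes "bs_eq l m (winv w @ apow r @ w) (apow s)" and "int j < bexp w"
  shows "l ^ Suc j dvd r * m ^ j"
proof -
  have normal: "normal (act_word w [])"
    by (rule normal_act_word) simp
  have "act_word (apow r @ w) [] = act_word (w @ apow s) []"
    using assms(1) by (intro act_word_bs_eq) (simp_all add: bs_eq_conj_iff)
  then have "shift_a r (act_word w []) = act_word w []"
    using normal by (simp add: act_word_append act_word_apow)
  moreover have "height (act_word w []) = bexp w"
    by (simp add: height_act_word)
  ultimately show ?thesis
    using shift_a_fixed_dvd normal assms(2) by simp
qed

lemma conj_apow_exponents_pos: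
  assumes "bs_eq l m (winv w @ apow r @ w) (apow s)" and "bexp w = int n" and "n \<ge> 1"
  shows "\<exists>x. r = (l div gcd l m) ^ n * gcd l m * x \<and> s = (m div gcd l m) ^ n * gcd l m * x"
proof (rule int_mult_pow_eq_parametrization[OF l_nonzero assms(3)])
  have "of_int r = (of_int l / of_int m) ^ n * (of_int s :: rat)"
    using slope_power_if_conj_apow[OF assms(1)] assms(2) by (simp add: slope_def)
  then have "of_int (r * m ^ n) = (of_int (s * l ^ n) :: rat)"
    using m_pos by (simp add: field_simps power_divide)
  then show "r * m ^ n = s * l ^ n"
    by (simp only: of_int_eq_iff)
  show "l dvd r" and "l ^ n dvd r * m ^ (n - 1)"
    using dvd_if_conj_apow[OF assms(1), of 0] dvd_if_conj_apow[OF assms(1), of "n - 1"] assms(2,3)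
    by simp_all
qed

lemma conj_exponents_if_conj_apow:
  assumes "bs_eq l m (winv w @ apow r @ w) (apow s)"
  shows "conj_exponents l m (bexp w) r s"
proof -
  consider "bexp w = 0" | "bexp w > 0" | "bexp w < 0"
    by linarith
  then show ?thesis
  proof cases
    case 1
    then show ?thesis using slope_power_if_conj_apow[OF assms] by (simp add: conj_exponents_def)
  next
    case 2
    then show ?thesis
      using conj_apow_exponents_pos[OF assms, of "nat (bexp w)"] by (simp add: conj_exponents_def)
  next
    case 3
    have inverse: "bs_eq l m (winv (winv w) @ apow s @ winv w) (apow r)"
      using bs_eq_conj_inverse[OF assms] by simp
    have "bexp (winv w) = int (nat (- bexp w))" and "nat (- bexp w) \<ge> 1"
      using 3 by (simp_all add: bexp_winv)
    from conj_apow_exponents_pos[OF inverse this] show ?thesis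
      using 3 by (auto simp: conj_exponents_def)
  qed
qed

end

theorem proposition1:
  fixes l m p r s :: int and h v :: word
  assumes "\<bar>l\<bar> > m" and "m > 0"
    and "bs_eq l m h (bpow p @ v)" and "bexp v = 0"
  shows "bs_eq l m (winv h @ apow r @ h) (apow s) \<longleftrightarrow>
     in_centralizer l m (apow s) v \<and>
     ((p = 0 \<and> r = s) \<or>
      (p > 0 \<and> (\<exists>x::int. r = (l div gcd l m) ^ nat p * gcd l m * x \<and>
                          s = (m div gcd l m) ^ nat p * gcd l m * x)) \<or>
      (p < 0 \<and> (\<exists>x::int. r = (m div gcd l m) ^ nat (- p) * gcd l m * x \<and>
                          s = (l div gcd l m) ^ nat (- p) * gcd l m * x)))"
proof -
  interpret bs_group l m
    using assms(1,2) by unfold_locales auto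
  have conj_h: "bs_eq l m (winv h @ apow r @ h) (apow s)
      \<longleftrightarrow> bs_eq l m (winv (bpow p @ v) @ apow r @ bpow p @ v) (apow s)"
    using bs_eq_conj_cong[OF assms(3), of "apow r"] bs_eq.sym bs_eq.trans by meson
  have "bexp (bpow p @ v) = p"
    using assms(4) by (simp add: bexp_append bexp_bpow)
  then have "conj_exponents l m p r s" if "bs_eq l m (winv h @ apow r @ h) (apow s)"
    using conj_exponents_if_conj_apow[of "bpow p @ v" r s] conj_h that by simp
  then show ?thesis
    using conj_bpow_apow_iff_in_centralizer conj_h unfolding conj_exponents_def by blast
qed

end
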